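(* For $r\ge 2$, let $H(r)$ be the graph on vertex set $\{1,\dots,2r+4\}$ in which $V_1=\{1,\dots,r+2\}$ and $V_2=\{r+3,\dots,2r+4\}$ each induce a complete graph, and the only edges between $V_1$ and $V_2$ are $\{i,r+2+i\}$ for $i=1,\dots,r$. Then $\operatorname{Z}(H(r))=\overline{\operatorname{Z}}(H(r))=r+2$ and $\underline{z_0}(H(r))=z_0(H(r))=2r+2=\overline{\operatorname{Z}}(H(r))+r$.
   Context: Zero forcing on a graph $G$: starting with a set $S$ of blue vertices (others white), a blue vertex $v$ may change a white vertex $w$ to blue if $w$ is the only white neighbor of $v$. $S$ is a zero forcing set if repeated application colors all of $V(G)$ blue. $\operatorname{Z}(G)$ is the minimum size of a zero forcing set, $\overline{\operatorname{Z}}(G)$ the maximum size of a minimal (under inclusion) zero forcing set. $\mathscr{Z}^{\rm TAR}(G)$ has vertices the zero forcing sets of $G$, two adjacent iff their symmetric difference has size 1; $\mathscr{Z}^{\rm TAR}_k(G)$ is its subgraph induced by zero forcing sets of size at most $k$. $\underline{z_0}(G)$ is the least $k$ with $\mathscr{Z}^{\rm TAR}_k(G)$ connected; $z_0(G)$ is the least $k$ such that $\mathscr{Z}^{\rm TAR}_i(G)$ is connected for every $i=k,\dots,|V(G)|$. *)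

theory Defs
  imports Main
begin

text \<open>Simple graphs are given by a vertex set V and a (symmetric, irreflexive)
edge relation E.\<close>

inductive_set zf_closure :: "'a set \<Rightarrow> ('a \<Rightarrow> 'a \<Rightarrow> bool) \<Rightarrow> 'a set \<Rightarrow> 'a set"
  for V :: "'a set" and E :: "'a \<Rightarrow> 'a \<Rightarrow> bool" and S :: "'a set"
where
  init: "x \<in> S \<Longrightarrow> x \<in> zf_closure V E S"
| force: "\<lbrakk> v \<in> zf_closure V E S; v \<in> V; w \<in> V; E v w;
            \<forall>u\<in>V. E v u \<and> u \<noteq> w \<longrightarrow> u \<in> zf_closure V E S \<rbrakk>
          \<Longrightarrow> w \<in> zf_closure V E S"

definition zero_forcing_set :: "'a set \<Rightarrow> ('a \<Rightarrow> 'a \<Rightarrow> bool) \<Rightarrow> 'a set \<Rightarrow> bool" where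
  "zero_forcing_set V E S \<longleftrightarrow> S \<subseteq> V \<and> zf_closure V E S = V"

definition minimal_zero_forcing_set :: "'a set \<Rightarrow> ('a \<Rightarrow> 'a \<Rightarrow> bool) \<Rightarrow> 'a set \<Rightarrow> bool" where
  "minimal_zero_forcing_set V E S \<longleftrightarrow>
     zero_forcing_set V E S \<and> (\<forall>T. T \<subset> S \<longrightarrow> \<not> zero_forcing_set V E T)"

definition Z :: "'a set \<Rightarrow> ('a \<Rightarrow> 'a \<Rightarrow> bool) \<Rightarrow> nat" where
  "Z V E = Min (card ` {S. zero_forcing_set V E S})"

definition Zbar :: "'a set \<Rightarrow> ('a \<Rightarrow> 'a \<Rightarrow> bool) \<Rightarrow> nat" where
  "Zbar V E = Max (card ` {S. minimal_zero_forcing_set V E S})"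

definition TAR_vertices :: "'a set \<Rightarrow> ('a \<Rightarrow> 'a \<Rightarrow> bool) \<Rightarrow> nat \<Rightarrow> 'a set set" where
  "TAR_vertices V E k = {S. zero_forcing_set V E S \<and> card S \<le> k}"

definition TAR_adj :: "'a set \<Rightarrow> 'a set \<Rightarrow> bool" where
  "TAR_adj S T \<longleftrightarrow> card ((S - T) \<union> (T - S)) = 1"

definition TAR_connected :: "'a set \<Rightarrow> ('a \<Rightarrow> 'a \<Rightarrow> bool) \<Rightarrow> nat \<Rightarrow> bool" where
  "TAR_connected V E k \<longleftrightarrow> TAR_vertices V E k \<noteq> {} \<and>
     (\<forall>S\<in>TAR_vertices V E k. \<forall>T\<in>TAR_vertices V E k.
        (S, T) \<in> {(A, B). A \<in> TAR_vertices V E k \<and> B \<in> TAR_vertices V E k \<and> TAR_adj A B}\<^sup>*)"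

definition z0_lower :: "'a set \<Rightarrow> ('a \<Rightarrow> 'a \<Rightarrow> bool) \<Rightarrow> nat" where
  "z0_lower V E = (LEAST k. TAR_connected V E k)"

definition z0 :: "'a set \<Rightarrow> ('a \<Rightarrow> 'a \<Rightarrow> bool) \<Rightarrow> nat" where
  "z0 V E = (LEAST k. \<forall>i. k \<le> i \<and> i \<le> card V \<longrightarrow> TAR_connected V E i)"

definition H_V :: "nat \<Rightarrow> nat set" where
  "H_V r = {1..2*r+4}"

definition H_E :: "nat \<Rightarrow> nat \<Rightarrow> nat \<Rightarrow> bool" where
  "H_E r i j \<longleftrightarrow> i \<in> H_V r \<and> j \<in> H_V r \<and> i \<noteq> j \<and>
     ((i \<le> r+2 \<and> j \<le> r+2) \<or> (r+3 \<le> i \<and> r+3 \<le> j) \<or>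
      (1 \<le> i \<and> i \<le> r \<and> j = r+2+i) \<or> (1 \<le> j \<and> j \<le> r \<and> i = r+2+j))"

end

theory Submission
  imports Defs
begin

(* In H(r) the vertices r+1, r+2 of the clique V1 = {1..r+2} are closed twins, and so are
   2r+3, 2r+4 in the clique V2 = {r+3..2r+4}. A pair of white closed twins is never forced,
   so every zero forcing set meets both pairs; and a set missing two vertices of each clique
   forces nothing, because every blue vertex sees two white vertices of its own clique.
   Conversely, r+1 vertices of V1 (among them a twin, whose neighbourhood lies in V1) and one
   twin of V2 force all of V1, then the partners r+3..2r+2 of 1..r, then the other twin of V2.
   So the zero forcing sets are the sets containing r+1 vertices of one clique and a twin of
   the other, and every minimal one has r+2 vertices: Z = Zbar = r+2.

   Adding or removing one vertex cannot take a zero forcing set with r+1 vertices in V1 to one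
   with only r of them unless the larger of the two sets has r+1 vertices in each clique, i.e.
   size at least 2r+2; so below that size {1..r+1, 2r+3} and {r+1, r+3..2r+3} are disconnected.
   From size 2r+2 on, since supersets of zero forcing sets are zero forcing, two zero forcing
   sets whose intersection is zero forcing are connected. This joins every zero forcing set to
   V1 with both twins of V2 added or to V2 with both twins of V1 added, and joins both of these
   to V - {1, r+3}. *)

section \<open>Zero forcing in general\<close>

lemma zf_closure_least:
  assumes "S \<subseteq> I"
    and "\<And>v w. v \<in> I \<Longrightarrow> v \<in> V \<Longrightarrow> w \<in> V \<Longrightarrow> E v w \<Longrightarrow>
            (\<forall>u\<in>V. E v u \<and> u \<noteq> w \<longrightarrow> u \<in> I) \<Longrightarrow> w \<in> I"
  shows "zf_closure V E S \<subseteq> I"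
proof
  fix x assume "x \<in> zf_closure V E S"
  then show "x \<in> I"
  proof (induction rule: zf_closure.induct)
    case (init x)
    then show ?case using assms(1) by blast
  next
    case (force v w)
    then show ?case using assms(2)[of v w] by blast
  qed
qed

lemma zf_closure_subset: "S \<subseteq> V \<Longrightarrow> zf_closure V E S \<subseteq> V"
  by (rule zf_closure_least) auto

lemma zf_closure_mono: "S \<subseteq> T \<Longrightarrow> zf_closure V E S \<subseteq> zf_closure V E T"
  by (intro zf_closure_least) (auto intro: zf_closure.intros)

lemma zero_forcing_set_superset:
  assumes "zero_forcing_set V E S" "S \<subseteq> T" "T \<subseteq> V"
  shows "zero_forcing_set V E T"
  using assms zf_closure_mono[OF \<open>S \<subseteq> T\<close>, of V E] zf_closure_subset[of T V E]
  unfolding zero_forcing_set_def by blast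

lemma finite_zero_forcing_sets: "finite V \<Longrightarrow> finite {S. zero_forcing_set V E S}"
  by (rule finite_subset[of _ "Pow V"]) (auto simp: zero_forcing_set_def)

lemma zf_closure_force:
  assumes "v \<in> zf_closure V E S" "v \<in> V" "u \<in> V" "E v u"
    and "\<And>y. y \<in> V \<Longrightarrow> E v y \<Longrightarrow> y \<noteq> u \<Longrightarrow> y \<in> zf_closure V E S"
  shows "u \<in> zf_closure V E S"
  by (rule zf_closure.force[OF assms(1-4)]) (use assms(5) in blast)

text \<open>A vertex adjacent to one of two white closed twins is adjacent to the other one too,
  so neither of them is ever forced.\<close>
lemma zero_forcing_set_meets_twins:
  assumes "zero_forcing_set V E S" "u \<in> V" "w \<in> V" "u \<noteq> w"
    and twins: "\<And>v. v \<in> V \<Longrightarrow> v \<noteq> u \<Longrightarrow> v \<noteq> w \<Longrightarrow> E v u \<longleftrightarrow> E v w"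
  shows "u \<in> S \<or> w \<in> S"
proof (rule ccontr)
  assume "\<not> (u \<in> S \<or> w \<in> S)"
  then have "S \<subseteq> - {u, w}" by blast
  then have "zf_closure V E S \<subseteq> - {u, w}"
  proof (rule zf_closure_least)
    fix v x assume v: "v \<in> - {u, w}" "v \<in> V" and "x \<in> V" "E v x"
      and others: "\<forall>y\<in>V. E v y \<and> y \<noteq> x \<longrightarrow> y \<in> - {u, w}"
    show "x \<in> - {u, w}"
    proof
      assume x: "x \<in> {u, w}"
      obtain t where t: "t \<in> {u, w}" "t \<noteq> x" using x assms(4) by blast
      have "E v u \<longleftrightarrow> E v w" using twins v by blast
      then have "E v t" using x t \<open>E v x\<close> by blast
      moreover have "t \<in> V" using t assms(2,3) by blast
      ultimately have "t \<in> - {u, w}" using others t(2) by blast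
      then show False using t(1) by blast
    qed
  qed
  then show False using assms(1,2) unfolding zero_forcing_set_def by blast
qed

lemma zf_closure_stalled:
  assumes "\<And>v. v \<in> S \<Longrightarrow> v \<in> V \<Longrightarrow>
             \<exists>u u'. u \<noteq> u' \<and> u \<in> V - S \<and> u' \<in> V - S \<and> E v u \<and> E v u'"
  shows "zf_closure V E S = S"
proof
  show "zf_closure V E S \<subseteq> S"
  proof (rule zf_closure_least)
    fix v w assume "v \<in> S" "v \<in> V" "w \<in> V" "E v w"
      and others: "\<forall>u\<in>V. E v u \<and> u \<noteq> w \<longrightarrow> u \<in> S"
    obtain u u' where "u \<noteq> u'" "u \<in> V - S" "u' \<in> V - S" "E v u" "E v u'"
      using assms[OF \<open>v \<in> S\<close> \<open>v \<in> V\<close>] by blast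
    then obtain y where "y \<in> V - S" "E v y" "y \<noteq> w" by (cases "u = w") auto
    then show "w \<in> S" using others by blast
  qed simp
qed (rule subsetI, rule zf_closure.init)

lemma zero_forcing_set_image:
  assumes onto: "\<sigma> ` V = V"
    and edges: "\<And>x y. x \<in> V \<Longrightarrow> y \<in> V \<Longrightarrow> E (\<sigma> x) (\<sigma> y) \<longleftrightarrow> E x y"
    and "zero_forcing_set V E S"
  shows "zero_forcing_set V E (\<sigma> ` S)"
proof -
  have image_closure: "\<sigma> x \<in> zf_closure V E (\<sigma> ` S)" if "x \<in> zf_closure V E S" for x
    using that
  proof (induction rule: zf_closure.induct)
    case (init x)
    then show ?case by (blast intro: zf_closure.init)
  next
    case (force v w)
    show ?case
    proof (rule zf_closure_force[of "\<sigma> v"])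
      fix y assume "y \<in> V" "E (\<sigma> v) y" "y \<noteq> \<sigma> w"
      moreover obtain x where "x \<in> V" "y = \<sigma> x" using \<open>y \<in> V\<close> onto by blast
      ultimately have "E v x" "x \<noteq> w" using edges force.hyps(2) by auto
      then show "y \<in> zf_closure V E (\<sigma> ` S)"
        using force.IH(2) \<open>x \<in> V\<close> \<open>y = \<sigma> x\<close> by blast
    next
      show "\<sigma> v \<in> zf_closure V E (\<sigma> ` S)" by (rule force.IH(1))
      show "\<sigma> v \<in> V" "\<sigma> w \<in> V" using force.hyps(2,3) onto by blast+
      show "E (\<sigma> v) (\<sigma> w)" using force.hyps(2-4) edges by blast
    qed
  qed
  have "V = \<sigma> ` zf_closure V E S"
    using assms(3) onto unfolding zero_forcing_set_def by simp
  also have "\<dots> \<subseteq> zf_closure V E (\<sigma> ` S)" using image_closure by blast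
  finally have "V \<subseteq> zf_closure V E (\<sigma> ` S)" .
  moreover have "\<sigma> ` S \<subseteq> V"
    using image_mono[of S V \<sigma>] onto assms(3) by (simp add: zero_forcing_set_def)
  ultimately show ?thesis
    using zf_closure_subset[of "\<sigma> ` S" V E] unfolding zero_forcing_set_def by blast
qed

lemma Diff_singleton_subset_if_card_Int_ge:
  assumes "finite W" "card W \<le> card (S \<inter> W) + 1" "u \<in> W" "u \<notin> S"
  shows "W - {u} \<subseteq> S"
proof -
  have sub: "S \<inter> W \<subseteq> W - {u}" using assms(4) by blast
  then have "card (S \<inter> W) \<le> card (W - {u})" using assms(1) by (intro card_mono) auto
  moreover have "card (W - {u}) \<le> card (S \<inter> W)" using assms by simp
  ultimately have "S \<inter> W = W - {u}" using assms(1) sub by (intro card_subset_eq) auto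
  then show ?thesis by blast
qed

lemma two_outside_if_card_Int_le:
  assumes "finite W" "card (S \<inter> W) + 2 \<le> card W"
  obtains u u' where "u \<noteq> u'" "u \<in> W - S" "u' \<in> W - S"
proof -
  have "card (W - S) = card W - card (W \<inter> S)"
    using assms(1) by (simp add: card_Diff_subset_Int)
  then have "2 \<le> card (W - S)" using assms(2) by (simp add: Int_commute)
  then obtain P where "P \<subseteq> W - S" "card P = 2" by (meson obtain_subset_with_card_n)
  then show ?thesis using that by (auto simp: card_2_iff)
qed

definition fills :: "nat \<Rightarrow> 'a set \<Rightarrow> 'a set \<Rightarrow> 'a set \<Rightarrow> bool" where
  "fills n A B S \<longleftrightarrow> n \<le> card (S \<inter> A) \<and> S \<inter> B \<noteq> {}"

lemma fills_image:
  assumes "inj f"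
  shows "fills n (f ` A) (f ` B) (f ` S) \<longleftrightarrow> fills n A B S"
proof -
  have "f ` S \<inter> f ` A = f ` (S \<inter> A)" "f ` S \<inter> f ` B = f ` (S \<inter> B)"
    using image_Int[OF assms] by simp_all
  moreover have "card (f ` (S \<inter> A)) = card (S \<inter> A)"
    using assms by (simp add: card_image inj_on_subset)
  ultimately show ?thesis by (simp add: fills_def)
qed

lemma fills_Int_Un: "fills n A B (S \<inter> (A \<union> B)) \<longleftrightarrow> fills n A B S"
proof -
  have restrict: "S \<inter> (A \<union> B) \<inter> A = S \<inter> A" "S \<inter> (A \<union> B) \<inter> B = S \<inter> B" by blast+
  show ?thesis unfolding fills_def restrict by (rule refl)
qed

lemma fills_card_ge:
  assumes "fills n A B S" "A \<inter> B = {}" "finite S"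
  shows "n + 1 \<le> card S"
proof -
  obtain b where b: "b \<in> S" "b \<in> B" using assms(1) by (auto simp: fills_def)
  have "S \<inter> A \<subseteq> S - {b}" using b assms(2) by blast
  then have "n \<le> card (S - {b})"
    using assms(1,3) card_mono[of "S - {b}" "S \<inter> A"] by (simp add: fills_def)
  moreover have "card S > 0" using b assms(3) card_gt_0_iff by blast
  ultimately show ?thesis using b by (simp add: card_Diff_singleton)
qed

lemma fills_obtain_subset:
  assumes "fills n A B S" "A \<inter> B = {}"
  obtains T where "T \<subseteq> S" "card T = n + 1" "fills n A B T"
proof -
  obtain b where b: "b \<in> S" "b \<in> B" using assms(1) by (auto simp: fills_def)
  obtain P where P: "P \<subseteq> S \<inter> A" "card P = n" "finite P"
    using assms(1) obtain_subset_with_card_n unfolding fills_def by metis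
  have "b \<notin> P" using P(1) b(2) assms(2) by blast
  then have "card (insert b P) = n + 1" using P(2,3) by simp
  moreover have "n \<le> card (insert b P \<inter> A)"
    using P card_mono[of "insert b P \<inter> A" P] by auto
  then have "fills n A B (insert b P)" using b(2) by (auto simp: fills_def)
  ultimately show ?thesis using that P(1) b(1) by blast
qed

section \<open>Paths in the token addition/removal graph\<close>

definition TAR_edges :: "'a set \<Rightarrow> ('a \<Rightarrow> 'a \<Rightarrow> bool) \<Rightarrow> nat \<Rightarrow> ('a set \<times> 'a set) set" where
  "TAR_edges V E k =
     {(A, B). A \<in> TAR_vertices V E k \<and> B \<in> TAR_vertices V E k \<and> TAR_adj A B}"

lemma TAR_connected_iff:
  "TAR_connected V E k \<longleftrightarrow> TAR_vertices V E k \<noteq> {} \<and>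
     (\<forall>S\<in>TAR_vertices V E k. \<forall>T\<in>TAR_vertices V E k. (S, T) \<in> (TAR_edges V E k)\<^sup>*)"
  by (simp add: TAR_connected_def TAR_edges_def)

lemma sym_TAR_edges: "sym (TAR_edges V E k)"
  by (auto simp: sym_def TAR_edges_def TAR_adj_def Un_commute)

lemma TAR_adj_insert: "a \<notin> A \<Longrightarrow> TAR_adj A (insert a A)"
proof -
  assume "a \<notin> A"
  then have "(A - insert a A) \<union> (insert a A - A) = {a}" by blast
  then show ?thesis by (simp add: TAR_adj_def)
qed

lemma TAR_adj_subset:
  assumes "TAR_adj X Y"
  shows "X \<subseteq> Y \<or> Y \<subseteq> X"
proof -
  obtain z where z: "(X - Y) \<union> (Y - X) = {z}"
    using assms unfolding TAR_adj_def by (rule card_1_singletonE)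
  then have "X - Y \<subseteq> {z}" "Y - X \<subseteq> {z}" by auto
  then show ?thesis by (cases "z \<in> X") auto
qed

lemma TAR_path_through_interval:
  assumes "A \<subseteq> B" "finite B"
    and between: "\<And>X. A \<subseteq> X \<Longrightarrow> X \<subseteq> B \<Longrightarrow> X \<in> TAR_vertices V E k"
  shows "(A, B) \<in> (TAR_edges V E k)\<^sup>*"
proof -
  have "(A, A \<union> D) \<in> (TAR_edges V E k)\<^sup>*" if "finite D" "D \<subseteq> B - A" for D
    using that
  proof (induction D rule: finite_subset_induct')
    case empty
    then show ?case by simp
  next
    case (insert a D)
    have "A \<union> D \<in> TAR_vertices V E k" "insert a (A \<union> D) \<in> TAR_vertices V E k"
      using insert.hyps(2,3) assms(1) by (auto intro!: between)
    moreover have "TAR_adj (A \<union> D) (insert a (A \<union> D))"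
      using insert.hyps(2,4) by (intro TAR_adj_insert) blast
    ultimately have "(A \<union> D, insert a (A \<union> D)) \<in> TAR_edges V E k"
      by (simp add: TAR_edges_def)
    with insert.IH show ?case by (simp add: rtrancl_into_rtrancl)
  qed
  from this[of "B - A"] show ?thesis using assms(1,2) by (simp add: Un_absorb1)
qed

lemma TAR_path_to_superset:
  assumes "finite V" "zero_forcing_set V E A" "A \<subseteq> B" "B \<in> TAR_vertices V E k"
  shows "(A, B) \<in> (TAR_edges V E k)\<^sup>*"
proof (rule TAR_path_through_interval)
  have B: "B \<subseteq> V" "card B \<le> k"
    using assms(4) by (auto simp: TAR_vertices_def zero_forcing_set_def)
  then show "finite B" using assms(1) finite_subset by blast
  fix X assume "A \<subseteq> X" "X \<subseteq> B"
  then show "X \<in> TAR_vertices V E k"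
    using zero_forcing_set_superset[OF assms(2)] B card_mono[OF \<open>finite B\<close>, of X]
    by (auto simp: TAR_vertices_def)
qed (rule assms(3))

lemma TAR_path_if_Int_zero_forcing:
  assumes "finite V" "S \<in> TAR_vertices V E k" "T \<in> TAR_vertices V E k"
    and "zero_forcing_set V E (S \<inter> T)"
  shows "(S, T) \<in> (TAR_edges V E k)\<^sup>*"
proof -
  have "(S \<inter> T, S) \<in> (TAR_edges V E k)\<^sup>*"
    using assms by (intro TAR_path_to_superset) auto
  then have "(S, S \<inter> T) \<in> (TAR_edges V E k)\<^sup>*"
    using sym_rtrancl[OF sym_TAR_edges] by (auto dest: symD)
  moreover have "(S \<inter> T, T) \<in> (TAR_edges V E k)\<^sup>*"
    using assms by (intro TAR_path_to_superset) auto
  ultimately show ?thesis by (rule rtrancl_trans)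
qed

definition V1 :: "nat \<Rightarrow> nat set" where "V1 r = {1..r+2}"
definition V2 :: "nat \<Rightarrow> nat set" where "V2 r = {r+3..2*r+4}"
definition twins1 :: "nat \<Rightarrow> nat set" where "twins1 r = {r+1, r+2}"
definition twins2 :: "nat \<Rightarrow> nat set" where "twins2 r = {2*r+3, 2*r+4}"

lemma H_V_eq: "H_V r = V1 r \<union> V2 r"
  by (auto simp: H_V_def V1_def V2_def)

lemma finite_H_V [simp]: "finite (H_V r)"
  by (simp add: H_V_def)

lemma card_V1 [simp]: "card (V1 r) = r + 2" and card_V2 [simp]: "card (V2 r) = r + 2"
  by (simp_all add: V1_def V2_def)

lemma V1_V2_disjoint: "V1 r \<inter> V2 r = {}"
  by (auto simp: V1_def V2_def)

lemma V1_twins2_disjoint: "V1 r \<inter> twins2 r = {}"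
  and V2_twins1_disjoint: "V2 r \<inter> twins1 r = {}"
  by (auto simp: V1_def V2_def twins1_def twins2_def)

lemma card_split_V1_V2:
  assumes "X \<subseteq> H_V r"
  shows "card X = card (X \<inter> V1 r) + card (X \<inter> V2 r)"
proof -
  have "finite X" using finite_subset[OF assms finite_H_V] .
  have "X = (X \<inter> V1 r) \<union> (X \<inter> V2 r)" using assms H_V_eq by blast
  also have "card \<dots> = card (X \<inter> V1 r) + card (X \<inter> V2 r)"
    using \<open>finite X\<close> V1_V2_disjoint by (intro card_Un_disjoint) auto
  finally show ?thesis .
qed

lemma H_E_irrefl: "\<not> H_E r x x"
  by (simp add: H_E_def)

lemma H_E_sym: "H_E r x y \<longleftrightarrow> H_E r y x"
  by (auto simp: H_E_def)

lemma H_E_V1_iff: "x \<in> V1 r \<Longrightarrow> y \<in> V1 r \<Longrightarrow> H_E r x y \<longleftrightarrow> x \<noteq> y"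
  by (auto simp: H_E_def H_V_def V1_def)

lemma H_E_V2_iff: "x \<in> V2 r \<Longrightarrow> y \<in> V2 r \<Longrightarrow> H_E r x y \<longleftrightarrow> x \<noteq> y"
  by (auto simp: H_E_def H_V_def V2_def)

lemma H_E_V1_V2_iff: "x \<in> V1 r \<Longrightarrow> y \<in> V2 r \<Longrightarrow> H_E r x y \<longleftrightarrow> x \<le> r \<and> y = x + (r+2)"
  by (auto simp: H_E_def H_V_def V1_def V2_def)

lemma H_E_twins1: "t \<in> twins1 r \<Longrightarrow> H_E r t y \<Longrightarrow> y \<in> V1 r"
  by (auto simp: H_E_def H_V_def V1_def twins1_def)

lemma H_E_twins2: "t \<in> twins2 r \<Longrightarrow> H_E r t y \<Longrightarrow> y \<in> V2 r"
  by (auto simp: H_E_def H_V_def V2_def twins2_def)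

lemma H_E_twins1_iff: "v \<in> H_V r \<Longrightarrow> v \<notin> twins1 r \<Longrightarrow> H_E r v (r+1) \<longleftrightarrow> H_E r v (r+2)"
  by (auto simp: H_E_def H_V_def twins1_def)

lemma H_E_twins2_iff:
  "v \<in> H_V r \<Longrightarrow> v \<notin> twins2 r \<Longrightarrow> H_E r v (2*r+3) \<longleftrightarrow> H_E r v (2*r+4)"
  by (auto simp: H_E_def H_V_def twins2_def)

lemma H_E_partner: "i \<in> {1..r} \<Longrightarrow> H_E r i (r + 2 + i)"
  by (auto simp: H_E_def H_V_def)

lemma H_E_partner_unique: "i \<in> {1..r} \<Longrightarrow> H_E r i y \<Longrightarrow> y \<noteq> r + 2 + i \<Longrightarrow> y \<in> V1 r"
  by (auto simp: H_E_def H_V_def V1_def)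

definition swap_sides :: "nat \<Rightarrow> nat \<Rightarrow> nat" where
  "swap_sides r i = (if i \<in> V1 r then i + (r+2) else if i \<in> V2 r then i - (r+2) else i)"

lemma swap_sides_swap_sides [simp]: "swap_sides r (swap_sides r i) = i"
  by (auto simp: swap_sides_def V1_def V2_def)

lemma inj_swap_sides: "inj (swap_sides r)"
  by (metis injI swap_sides_swap_sides)

lemma swap_sides_on_V1: "x \<in> V1 r \<Longrightarrow> swap_sides r x = x + (r+2)"
  and swap_sides_on_V2: "x \<in> V2 r \<Longrightarrow> swap_sides r x = x - (r+2)"
  by (auto simp: swap_sides_def V1_def V2_def)

lemma swap_sides_mem_V1: "x \<in> V1 r \<Longrightarrow> swap_sides r x \<in> V2 r"
  and swap_sides_mem_V2: "x \<in> V2 r \<Longrightarrow> swap_sides r x \<in> V1 r"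
  by (auto simp: swap_sides_def V1_def V2_def)

lemma swap_sides_V2: "swap_sides r ` V2 r = V1 r"
proof -
  have "swap_sides r ` V1 r \<subseteq> V2 r" "swap_sides r ` V2 r \<subseteq> V1 r"
    using swap_sides_mem_V1 swap_sides_mem_V2 by blast+
  then have "V1 r \<subseteq> swap_sides r ` V2 r"
    using image_mono[of "swap_sides r ` V1 r" "V2 r" "swap_sides r"] by (simp add: image_image)
  with \<open>swap_sides r ` V2 r \<subseteq> V1 r\<close> show ?thesis by blast
qed

lemma swap_sides_twins1: "swap_sides r ` twins1 r = twins2 r"
  by (auto simp: swap_sides_def twins1_def twins2_def V1_def V2_def)

lemma swap_sides_H_V: "swap_sides r ` H_V r = H_V r"
proof -
  have "swap_sides r ` V1 r = swap_sides r ` swap_sides r ` V2 r" by (simp add: swap_sides_V2)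
  then have "swap_sides r ` V1 r = V2 r" by (simp add: image_image)
  then show ?thesis using swap_sides_V2 by (simp add: H_V_eq image_Un Un_commute)
qed

lemma H_E_swap_sides_V1_V2:
  assumes "x \<in> V1 r" "y \<in> V2 r"
  shows "H_E r (swap_sides r x) (swap_sides r y) \<longleftrightarrow> H_E r x y"
proof -
  have "H_E r (swap_sides r x) (swap_sides r y) \<longleftrightarrow> H_E r (swap_sides r y) (swap_sides r x)"
    by (rule H_E_sym)
  also have "\<dots> \<longleftrightarrow> y - (r+2) \<le> r \<and> x + (r+2) = y - (r+2) + (r+2)"
    using H_E_V1_V2_iff[OF swap_sides_mem_V2[OF assms(2)] swap_sides_mem_V1[OF assms(1)]]
      assms by (simp add: swap_sides_on_V1 swap_sides_on_V2)
  also have "\<dots> \<longleftrightarrow> H_E r x y"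
    using assms by (auto simp: H_E_V1_V2_iff V2_def)
  finally show ?thesis .
qed

lemma H_E_swap_sides:
  assumes "x \<in> H_V r" "y \<in> H_V r"
  shows "H_E r (swap_sides r x) (swap_sides r y) \<longleftrightarrow> H_E r x y"
proof -
  consider "x \<in> V1 r" "y \<in> V1 r" | "x \<in> V2 r" "y \<in> V2 r"
    | "x \<in> V1 r" "y \<in> V2 r" | "x \<in> V2 r" "y \<in> V1 r"
    using assms H_V_eq by blast
  then show ?thesis
  proof cases
    case 1
    then show ?thesis
      by (simp add: H_E_V2_iff[OF swap_sides_mem_V1 swap_sides_mem_V1] H_E_V1_iff
          inj_eq[OF inj_swap_sides])
  next
    case 2
    then show ?thesis
      by (simp add: H_E_V1_iff[OF swap_sides_mem_V2 swap_sides_mem_V2] H_E_V2_iff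
          inj_eq[OF inj_swap_sides])
  next
    case 3
    then show ?thesis by (rule H_E_swap_sides_V1_V2)
  next
    case 4
    have "H_E r (swap_sides r x) (swap_sides r y) \<longleftrightarrow> H_E r (swap_sides r y) (swap_sides r x)"
      by (rule H_E_sym)
    also have "\<dots> \<longleftrightarrow> H_E r y x" by (rule H_E_swap_sides_V1_V2[OF 4(2) 4(1)])
    also have "\<dots> \<longleftrightarrow> H_E r x y" by (rule H_E_sym)
    finally show ?thesis .
  qed
qed

section \<open>Zero forcing sets of H(r)\<close>

lemma V1_subset_zf_closure:
  assumes "r + 1 \<le> card (S \<inter> V1 r)"
  shows "V1 r \<subseteq> zf_closure (H_V r) (H_E r) S"
proof
  fix u assume u: "u \<in> V1 r"
  show "u \<in> zf_closure (H_V r) (H_E r) S"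
  proof (cases "u \<in> S")
    case True
    then show ?thesis by (rule zf_closure.init)
  next
    case False
    have others: "V1 r - {u} \<subseteq> S"
      using assms u False by (intro Diff_singleton_subset_if_card_Int_ge) (auto simp: V1_def)
    define t where "t = (if u = r + 1 then r + 2 else r + 1)"
    have t: "t \<in> twins1 r" "t \<noteq> u" by (simp_all add: t_def twins1_def)
    then have "t \<in> V1 r" by (auto simp: twins1_def V1_def)
    show ?thesis
    proof (rule zf_closure_force[of t])
      show "t \<in> zf_closure (H_V r) (H_E r) S"
        using others \<open>t \<in> V1 r\<close> t(2) by (blast intro: zf_closure.init)
      show "t \<in> H_V r" "u \<in> H_V r" using \<open>t \<in> V1 r\<close> u H_V_eq by auto
      show "H_E r t u" using H_E_V1_iff \<open>t \<in> V1 r\<close> u t(2) by blast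
      fix y assume "y \<in> H_V r" "H_E r t y" "y \<noteq> u"
      then have "y \<in> V1 r - {u}" using H_E_twins1[OF t(1)] by blast
      then show "y \<in> zf_closure (H_V r) (H_E r) S" using others by (blast intro: zf_closure.init)
    qed
  qed
qed

lemma partners_subset_zf_closure:
  assumes V1_forced: "V1 r \<subseteq> zf_closure (H_V r) (H_E r) S"
  shows "{r+3..2*r+2} \<subseteq> zf_closure (H_V r) (H_E r) S"
proof
  fix y assume y: "y \<in> {r+3..2*r+2}"
  define i where "i = y - (r+2)"
  have i: "i \<in> {1..r}" "y = r + 2 + i" using y by (auto simp: i_def)
  show "y \<in> zf_closure (H_V r) (H_E r) S"
  proof (rule zf_closure_force[of i])
    show "i \<in> zf_closure (H_V r) (H_E r) S" using V1_forced i(1) by (auto simp: V1_def)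
    show "i \<in> H_V r" "y \<in> H_V r" using i by (auto simp: H_V_def)
    show "H_E r i y" using H_E_partner[OF i(1)] i(2) by simp
    fix u assume "u \<in> H_V r" "H_E r i u" "u \<noteq> y"
    then have "u \<in> V1 r" using H_E_partner_unique[OF i(1)] i(2) by blast
    then show "u \<in> zf_closure (H_V r) (H_E r) S" using V1_forced by blast
  qed
qed

lemma twins2_subset_zf_closure:
  assumes partners_forced: "{r+3..2*r+2} \<subseteq> zf_closure (H_V r) (H_E r) S"
    and "S \<inter> twins2 r \<noteq> {}"
  shows "twins2 r \<subseteq> zf_closure (H_V r) (H_E r) S"
proof
  fix y assume y: "y \<in> twins2 r"
  obtain x where x: "x \<in> S" "x \<in> twins2 r" using assms(2) by blast
  show "y \<in> zf_closure (H_V r) (H_E r) S"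
  proof (cases "y = x")
    case True
    then show ?thesis using x by (blast intro: zf_closure.init)
  next
    case False
    have twins: "twins2 r = {x, y}" using x(2) y False by (auto simp: twins2_def)
    have "x \<in> V2 r" "y \<in> V2 r" using x(2) y by (auto simp: twins2_def V2_def)
    show ?thesis
    proof (rule zf_closure_force[of x])
      show "x \<in> zf_closure (H_V r) (H_E r) S" using x by (blast intro: zf_closure.init)
      show "x \<in> H_V r" "y \<in> H_V r" using \<open>x \<in> V2 r\<close> \<open>y \<in> V2 r\<close> H_V_eq by auto
      show "H_E r x y" using H_E_V2_iff \<open>x \<in> V2 r\<close> \<open>y \<in> V2 r\<close> False by blast
      fix u assume "u \<in> H_V r" "H_E r x u" "u \<noteq> y"
      moreover have "u \<noteq> x" using \<open>H_E r x u\<close> H_E_irrefl by metis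
      ultimately have "u \<in> V2 r - twins2 r" using H_E_twins2[OF x(2)] twins by blast
      also have "\<dots> = {r+3..2*r+2}" by (auto simp: V2_def twins2_def)
      finally show "u \<in> zf_closure (H_V r) (H_E r) S" using partners_forced by blast
    qed
  qed
qed

lemma zero_forcing_set_if_fills_V1:
  assumes "S \<subseteq> H_V r" "fills (r+1) (V1 r) (twins2 r) S"
  shows "zero_forcing_set (H_V r) (H_E r) S"
proof -
  have "V1 r \<subseteq> zf_closure (H_V r) (H_E r) S"
    using assms(2) by (intro V1_subset_zf_closure) (simp add: fills_def)
  moreover from this have "{r+3..2*r+2} \<subseteq> zf_closure (H_V r) (H_E r) S"
    by (rule partners_subset_zf_closure)
  moreover from this have "twins2 r \<subseteq> zf_closure (H_V r) (H_E r) S"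
    using assms(2) by (intro twins2_subset_zf_closure) (simp_all add: fills_def)
  moreover have "H_V r = V1 r \<union> {r+3..2*r+2} \<union> twins2 r"
    by (auto simp: H_V_def V1_def twins2_def)
  ultimately show ?thesis
    using zf_closure_subset[OF assms(1)] assms(1) unfolding zero_forcing_set_def by blast
qed

lemma zero_forcing_set_if_fills_V2:
  assumes "S \<subseteq> H_V r" "fills (r+1) (V2 r) (twins1 r) S"
  shows "zero_forcing_set (H_V r) (H_E r) S"
proof -
  have "fills (r+1) (V1 r) (twins2 r) (swap_sides r ` S)"
    using assms(2) fills_image[OF inj_swap_sides, of "r+1" r "V2 r" "twins1 r" S]
    by (simp add: swap_sides_V2 swap_sides_twins1)
  moreover have "swap_sides r ` S \<subseteq> H_V r"
    using assms(1) swap_sides_H_V by blast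
  ultimately have "zero_forcing_set (H_V r) (H_E r) (swap_sides r ` S)"
    by (intro zero_forcing_set_if_fills_V1)
  then have "zero_forcing_set (H_V r) (H_E r) (swap_sides r ` swap_sides r ` S)"
    using H_E_swap_sides by (rule zero_forcing_set_image[OF swap_sides_H_V, rotated])
  then show ?thesis by (simp add: image_image)
qed

lemma zero_forcing_set_meets_twins1:
  "zero_forcing_set (H_V r) (H_E r) S \<Longrightarrow> S \<inter> twins1 r \<noteq> {}"
  using zero_forcing_set_meets_twins[of "H_V r" "H_E r" S "r+1" "r+2"] H_E_twins1_iff
  by (auto simp: H_V_def twins1_def)

lemma zero_forcing_set_meets_twins2:
  "zero_forcing_set (H_V r) (H_E r) S \<Longrightarrow> S \<inter> twins2 r \<noteq> {}"
  using zero_forcing_set_meets_twins[of "H_V r" "H_E r" S "2*r+3" "2*r+4"] H_E_twins2_iff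
  by (auto simp: H_V_def twins2_def)

lemma zero_forcing_set_fills:
  assumes zfs: "zero_forcing_set (H_V r) (H_E r) S"
  shows "fills (r+1) (V1 r) (twins2 r) S \<or> fills (r+1) (V2 r) (twins1 r) S"
proof -
  have "r + 1 \<le> card (S \<inter> V1 r) \<or> r + 1 \<le> card (S \<inter> V2 r)"
  proof (rule ccontr)
    assume "\<not> ?thesis"
    then have light: "card (S \<inter> V1 r) + 2 \<le> card (V1 r)" "card (S \<inter> V2 r) + 2 \<le> card (V2 r)"
      by simp_all
    have "zf_closure (H_V r) (H_E r) S = S"
    proof (rule zf_closure_stalled)
      fix v assume "v \<in> S" "v \<in> H_V r"
      then consider "v \<in> V1 r" | "v \<in> V2 r" using H_V_eq by blast
      then show "\<exists>u u'. u \<noteq> u' \<and> u \<in> H_V r - S \<and> u' \<in> H_V r - S \<and> H_E r v u \<and> H_E r v u'"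
      proof cases
        case 1
        obtain u u' where "u \<noteq> u'" "u \<in> V1 r - S" "u' \<in> V1 r - S"
          using two_outside_if_card_Int_le[OF _ light(1)] by (auto simp: V1_def)
        then show ?thesis using H_E_V1_iff 1 \<open>v \<in> S\<close> H_V_eq by blast
      next
        case 2
        obtain u u' where "u \<noteq> u'" "u \<in> V2 r - S" "u' \<in> V2 r - S"
          using two_outside_if_card_Int_le[OF _ light(2)] by (auto simp: V2_def)
        then show ?thesis using H_E_V2_iff 2 \<open>v \<in> S\<close> H_V_eq by blast
      qed
    qed
    then have "S \<inter> V1 r = V1 r" using zfs H_V_eq unfolding zero_forcing_set_def by blast
    then show False using light(1) by simp
  qed
  then show ?thesis
    using zero_forcing_set_meets_twins1[OF zfs] zero_forcing_set_meets_twins2[OF zfs]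
    by (auto simp: fills_def)
qed

lemma zero_forcing_set_H_iff:
  "zero_forcing_set (H_V r) (H_E r) S \<longleftrightarrow>
     S \<subseteq> H_V r \<and> (fills (r+1) (V1 r) (twins2 r) S \<or> fills (r+1) (V2 r) (twins1 r) S)"
proof
  assume zfs: "zero_forcing_set (H_V r) (H_E r) S"
  then have "S \<subseteq> H_V r" by (simp add: zero_forcing_set_def)
  with zero_forcing_set_fills[OF zfs]
  show "S \<subseteq> H_V r \<and> (fills (r+1) (V1 r) (twins2 r) S \<or> fills (r+1) (V2 r) (twins1 r) S)"
    by blast
qed (use zero_forcing_set_if_fills_V1 zero_forcing_set_if_fills_V2 in blast)

lemma card_zero_forcing_set_ge:
  assumes "zero_forcing_set (H_V r) (H_E r) S"
  shows "r + 2 \<le> card S"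
proof -
  have "finite S" using assms finite_subset unfolding zero_forcing_set_def by fastforce
  then show ?thesis
    using assms fills_card_ge[OF _ V1_twins2_disjoint] fills_card_ge[OF _ V2_twins1_disjoint]
    unfolding zero_forcing_set_H_iff by fastforce
qed

lemma zero_forcing_set_obtain_subset:
  assumes "zero_forcing_set (H_V r) (H_E r) S"
  obtains T where "T \<subseteq> S" "card T = r + 2" "zero_forcing_set (H_V r) (H_E r) T"
proof -
  have S: "S \<subseteq> H_V r" and
    sides: "fills (r+1) (V1 r) (twins2 r) S \<or> fills (r+1) (V2 r) (twins1 r) S"
    using assms unfolding zero_forcing_set_H_iff by blast+
  from sides show ?thesis
  proof
    assume "fills (r+1) (V1 r) (twins2 r) S"
    then obtain T where "T \<subseteq> S" "card T = r + 1 + 1" "fills (r+1) (V1 r) (twins2 r) T"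
      by (rule fills_obtain_subset[OF _ V1_twins2_disjoint])
    then show ?thesis using that S by (auto simp: zero_forcing_set_H_iff)
  next
    assume "fills (r+1) (V2 r) (twins1 r) S"
    then obtain T where "T \<subseteq> S" "card T = r + 1 + 1" "fills (r+1) (V2 r) (twins1 r) T"
      by (rule fills_obtain_subset[OF _ V2_twins1_disjoint])
    then show ?thesis using that S by (auto simp: zero_forcing_set_H_iff)
  qed
qed

definition left_zfs :: "nat \<Rightarrow> nat set" where
  "left_zfs r = insert (2*r+3) {1..r+1}"

definition right_zfs :: "nat \<Rightarrow> nat set" where
  "right_zfs r = insert (r+1) {r+3..2*r+3}"

lemma left_zfs: "zero_forcing_set (H_V r) (H_E r) (left_zfs r)" "card (left_zfs r) = r + 2"
proof -
  have "left_zfs r \<inter> V1 r = {1..r+1}" by (auto simp: left_zfs_def V1_def)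
  then have "fills (r+1) (V1 r) (twins2 r) (left_zfs r)"
    by (simp add: fills_def left_zfs_def twins2_def)
  moreover have "left_zfs r \<subseteq> H_V r" by (auto simp: left_zfs_def H_V_def)
  ultimately show "zero_forcing_set (H_V r) (H_E r) (left_zfs r)"
    by (simp add: zero_forcing_set_H_iff)
  show "card (left_zfs r) = r + 2" by (simp add: left_zfs_def)
qed

lemma right_zfs: "zero_forcing_set (H_V r) (H_E r) (right_zfs r)" "card (right_zfs r) = r + 2"
proof -
  have "right_zfs r \<inter> V2 r = {r+3..2*r+3}" by (auto simp: right_zfs_def V2_def)
  then have "fills (r+1) (V2 r) (twins1 r) (right_zfs r)"
    by (simp add: fills_def right_zfs_def twins1_def)
  moreover have "right_zfs r \<subseteq> H_V r" by (auto simp: right_zfs_def H_V_def)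
  ultimately show "zero_forcing_set (H_V r) (H_E r) (right_zfs r)"
    by (simp add: zero_forcing_set_H_iff)
  show "card (right_zfs r) = r + 2" by (simp add: right_zfs_def)
qed

lemma Z_H: "Z (H_V r) (H_E r) = r + 2"
  unfolding Z_def
proof (rule Min_eqI)
  show "finite (card ` {S. zero_forcing_set (H_V r) (H_E r) S})"
    by (simp add: finite_zero_forcing_sets)
  show "r + 2 \<in> card ` {S. zero_forcing_set (H_V r) (H_E r) S}"
    using left_zfs by (intro image_eqI[of _ _ "left_zfs r"]) simp_all
qed (use card_zero_forcing_set_ge in blast)

lemma minimal_zero_forcing_set_card:
  assumes "minimal_zero_forcing_set (H_V r) (H_E r) M"
  shows "card M = r + 2"
proof -
  have "zero_forcing_set (H_V r) (H_E r) M"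
    using assms by (simp add: minimal_zero_forcing_set_def)
  then obtain T where "T \<subseteq> M" "card T = r + 2" "zero_forcing_set (H_V r) (H_E r) T"
    by (rule zero_forcing_set_obtain_subset)
  then show ?thesis using assms unfolding minimal_zero_forcing_set_def by blast
qed

lemma minimal_left_zfs: "minimal_zero_forcing_set (H_V r) (H_E r) (left_zfs r)"
  unfolding minimal_zero_forcing_set_def
proof (intro conjI allI impI)
  fix T assume "T \<subset> left_zfs r"
  then have "card T < r + 2"
    using left_zfs(2) psubset_card_mono[of "left_zfs r" T] by (simp add: left_zfs_def)
  then show "\<not> zero_forcing_set (H_V r) (H_E r) T" using card_zero_forcing_set_ge by fastforce
qed (rule left_zfs(1))

lemma Zbar_H: "Zbar (H_V r) (H_E r) = r + 2"
  unfolding Zbar_def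
proof (rule Max_eqI)
  have "{S. minimal_zero_forcing_set (H_V r) (H_E r) S} \<subseteq> {S. zero_forcing_set (H_V r) (H_E r) S}"
    by (auto simp: minimal_zero_forcing_set_def)
  then show "finite (card ` {S. minimal_zero_forcing_set (H_V r) (H_E r) S})"
    using finite_zero_forcing_sets[of "H_V r" "H_E r"] finite_subset by auto
  show "r + 2 \<in> card ` {S. minimal_zero_forcing_set (H_V r) (H_E r) S}"
    using minimal_left_zfs left_zfs(2) by (intro image_eqI[of _ _ "left_zfs r"]) simp_all
qed (use minimal_zero_forcing_set_card in fastforce)

section \<open>Connectivity of the token addition/removal graphs\<close>

definition hub1 :: "nat \<Rightarrow> nat set" where "hub1 r = V1 r \<union> twins2 r"
definition hub2 :: "nat \<Rightarrow> nat set" where "hub2 r = V2 r \<union> twins1 r"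
definition centre :: "nat \<Rightarrow> nat set" where "centre r = H_V r - {1, r + 3}"

lemma hub1_TAR_vertex:
  assumes "r + 4 \<le> k"
  shows "hub1 r \<in> TAR_vertices (H_V r) (H_E r) k"
proof -
  have "hub1 r \<inter> V1 r = V1 r" "2*r+3 \<in> hub1 r \<inter> twins2 r" by (auto simp: hub1_def twins2_def)
  then have "fills (r+1) (V1 r) (twins2 r) (hub1 r)" by (auto simp: fills_def)
  moreover have "hub1 r \<subseteq> H_V r" by (auto simp: hub1_def H_V_def V1_def twins2_def)
  moreover have "card (hub1 r) = r + 4"
    unfolding hub1_def using V1_twins2_disjoint
    by (subst card_Un_disjoint) (simp_all add: V1_def twins2_def)
  ultimately show ?thesis using assms by (simp add: TAR_vertices_def zero_forcing_set_H_iff)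
qed

lemma hub2_TAR_vertex:
  assumes "r + 4 \<le> k"
  shows "hub2 r \<in> TAR_vertices (H_V r) (H_E r) k"
proof -
  have "hub2 r \<inter> V2 r = V2 r" "r+1 \<in> hub2 r \<inter> twins1 r" by (auto simp: hub2_def twins1_def)
  then have "fills (r+1) (V2 r) (twins1 r) (hub2 r)" by (auto simp: fills_def)
  moreover have "hub2 r \<subseteq> H_V r" by (auto simp: hub2_def H_V_def V2_def twins1_def)
  moreover have "card (hub2 r) = r + 4"
    unfolding hub2_def using V2_twins1_disjoint
    by (subst card_Un_disjoint) (simp_all add: V2_def twins1_def)
  ultimately show ?thesis using assms by (simp add: TAR_vertices_def zero_forcing_set_H_iff)
qed

lemma zero_forcing_hub1_Int_centre:
  assumes "r \<ge> 1"
  shows "zero_forcing_set (H_V r) (H_E r) (hub1 r \<inter> centre r)"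
proof -
  have "hub1 r \<inter> centre r \<inter> V1 r = V1 r - {1}"
    by (auto simp: hub1_def centre_def H_V_def V1_def)
  moreover have "1 \<in> V1 r" by (simp add: V1_def)
  moreover have "2*r+3 \<in> hub1 r \<inter> centre r \<inter> twins2 r"
    using assms by (auto simp: hub1_def centre_def H_V_def twins2_def)
  ultimately have "fills (r+1) (V1 r) (twins2 r) (hub1 r \<inter> centre r)"
    by (auto simp: fills_def)
  moreover have "hub1 r \<inter> centre r \<subseteq> H_V r" by (auto simp: centre_def)
  ultimately show ?thesis by (simp add: zero_forcing_set_H_iff)
qed

lemma zero_forcing_hub2_Int_centre:
  assumes "r \<ge> 1"
  shows "zero_forcing_set (H_V r) (H_E r) (hub2 r \<inter> centre r)"
proof -
  have "hub2 r \<inter> centre r \<inter> V2 r = V2 r - {r+3}"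
    by (auto simp: hub2_def centre_def H_V_def V2_def)
  moreover have "r+3 \<in> V2 r" by (simp add: V2_def)
  moreover have "r+1 \<in> hub2 r \<inter> centre r \<inter> twins1 r"
    using assms by (auto simp: hub2_def centre_def H_V_def twins1_def)
  ultimately have "fills (r+1) (V2 r) (twins1 r) (hub2 r \<inter> centre r)"
    by (auto simp: fills_def)
  moreover have "hub2 r \<inter> centre r \<subseteq> H_V r" by (auto simp: centre_def)
  ultimately show ?thesis by (simp add: zero_forcing_set_H_iff)
qed

lemma centre_TAR_vertex:
  assumes "r \<ge> 1" "2*r + 2 \<le> k"
  shows "centre r \<in> TAR_vertices (H_V r) (H_E r) k"
proof -
  have "zero_forcing_set (H_V r) (H_E r) (centre r)"
    using zero_forcing_hub1_Int_centre[OF assms(1)]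
    by (rule zero_forcing_set_superset) (auto simp: centre_def)
  moreover have "card (centre r) = 2*r + 2" by (simp add: centre_def H_V_def card_Diff_subset)
  ultimately show ?thesis using assms(2) by (simp add: TAR_vertices_def)
qed

lemma TAR_path_to_centre:
  assumes "r \<ge> 2" "2*r + 2 \<le> k" "S \<in> TAR_vertices (H_V r) (H_E r) k"
  shows "(S, centre r) \<in> (TAR_edges (H_V r) (H_E r) k)\<^sup>*"
proof -
  have S: "S \<subseteq> H_V r" "fills (r+1) (V1 r) (twins2 r) S \<or> fills (r+1) (V2 r) (twins1 r) S"
    using assms(3) by (auto simp: TAR_vertices_def zero_forcing_set_H_iff)
  have centre: "centre r \<in> TAR_vertices (H_V r) (H_E r) k"
    using assms(1,2) by (intro centre_TAR_vertex) auto
  from S(2) show ?thesis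
  proof
    assume "fills (r+1) (V1 r) (twins2 r) S"
    then have "fills (r+1) (V1 r) (twins2 r) (S \<inter> hub1 r)" by (simp add: fills_Int_Un hub1_def)
    then have "zero_forcing_set (H_V r) (H_E r) (S \<inter> hub1 r)"
      using S(1) by (auto simp: zero_forcing_set_H_iff)
    then have "(S, hub1 r) \<in> (TAR_edges (H_V r) (H_E r) k)\<^sup>*"
      using assms hub1_TAR_vertex by (intro TAR_path_if_Int_zero_forcing) auto
    moreover have "(hub1 r, centre r) \<in> (TAR_edges (H_V r) (H_E r) k)\<^sup>*"
      using assms centre hub1_TAR_vertex zero_forcing_hub1_Int_centre
      by (intro TAR_path_if_Int_zero_forcing) auto
    ultimately show ?thesis by (rule rtrancl_trans)
  next
    assume "fills (r+1) (V2 r) (twins1 r) S"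
    then have "fills (r+1) (V2 r) (twins1 r) (S \<inter> hub2 r)" by (simp add: fills_Int_Un hub2_def)
    then have "zero_forcing_set (H_V r) (H_E r) (S \<inter> hub2 r)"
      using S(1) by (auto simp: zero_forcing_set_H_iff)
    then have "(S, hub2 r) \<in> (TAR_edges (H_V r) (H_E r) k)\<^sup>*"
      using assms hub2_TAR_vertex by (intro TAR_path_if_Int_zero_forcing) auto
    moreover have "(hub2 r, centre r) \<in> (TAR_edges (H_V r) (H_E r) k)\<^sup>*"
      using assms centre hub2_TAR_vertex zero_forcing_hub2_Int_centre
      by (intro TAR_path_if_Int_zero_forcing) auto
    ultimately show ?thesis by (rule rtrancl_trans)
  qed
qed

lemma TAR_connected_H:
  assumes "r \<ge> 2" "2*r + 2 \<le> k"
  shows "TAR_connected (H_V r) (H_E r) k"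
  unfolding TAR_connected_iff
proof (intro conjI ballI)
  show "TAR_vertices (H_V r) (H_E r) k \<noteq> {}"
    using centre_TAR_vertex[of r k] assms by auto
  fix S T assume "S \<in> TAR_vertices (H_V r) (H_E r) k" "T \<in> TAR_vertices (H_V r) (H_E r) k"
  then have "(S, centre r) \<in> (TAR_edges (H_V r) (H_E r) k)\<^sup>*"
    "(T, centre r) \<in> (TAR_edges (H_V r) (H_E r) k)\<^sup>*"
    using TAR_path_to_centre assms by blast+
  then show "(S, T) \<in> (TAR_edges (H_V r) (H_E r) k)\<^sup>*"
    using sym_rtrancl[OF sym_TAR_edges] by (blast dest: symD intro: rtrancl_trans)
qed

lemma TAR_edge_preserves_card_Int_V1:
  assumes "k \<le> 2*r + 1" "(X, Y) \<in> TAR_edges (H_V r) (H_E r) k" "r + 1 \<le> card (X \<inter> V1 r)"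
  shows "r + 1 \<le> card (Y \<inter> V1 r)"
proof (rule ccontr)
  assume light: "\<not> r + 1 \<le> card (Y \<inter> V1 r)"
  have X: "X \<subseteq> H_V r" "card X \<le> k" and Y: "zero_forcing_set (H_V r) (H_E r) Y"
    and "TAR_adj X Y"
    using assms(2) by (auto simp: TAR_edges_def TAR_vertices_def zero_forcing_set_def)
  have "finite X" using finite_subset[OF X(1) finite_H_V] .
  from \<open>TAR_adj X Y\<close> consider "X \<subseteq> Y" | "Y \<subseteq> X" using TAR_adj_subset by blast
  then show False
  proof cases
    case 1
    have "finite Y" using Y finite_subset[OF _ finite_H_V] by (auto simp: zero_forcing_set_def)
    then have "card (X \<inter> V1 r) \<le> card (Y \<inter> V1 r)" using 1 by (intro card_mono) auto
    then show False using light assms(3) by simp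
  next
    case 2
    have "r + 1 \<le> card (Y \<inter> V2 r)"
      using Y light by (auto simp: zero_forcing_set_H_iff fills_def)
    also have "\<dots> \<le> card (X \<inter> V2 r)" using 2 \<open>finite X\<close> by (intro card_mono) auto
    finally have "2*r + 2 \<le> card X" using card_split_V1_V2[OF X(1)] assms(3) by simp
    then show False using X(2) assms(1) by simp
  qed
qed

lemma not_TAR_connected_H:
  assumes "r \<ge> 1" "k \<le> 2*r + 1"
  shows "\<not> TAR_connected (H_V r) (H_E r) k"
proof
  assume connected: "TAR_connected (H_V r) (H_E r) k"
  then obtain S where "S \<in> TAR_vertices (H_V r) (H_E r) k" by (auto simp: TAR_connected_iff)
  then have "r + 2 \<le> k"
    using card_zero_forcing_set_ge by (fastforce simp: TAR_vertices_def)
  then have "left_zfs r \<in> TAR_vertices (H_V r) (H_E r) k"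
    "right_zfs r \<in> TAR_vertices (H_V r) (H_E r) k"
    using left_zfs right_zfs by (simp_all add: TAR_vertices_def)
  then have "(left_zfs r, right_zfs r) \<in> (TAR_edges (H_V r) (H_E r) k)\<^sup>*"
    using connected by (simp add: TAR_connected_iff)
  then have "r + 1 \<le> card (right_zfs r \<inter> V1 r)"
  proof (induction rule: rtrancl_induct)
    case base
    have "left_zfs r \<inter> V1 r = {1..r+1}" by (auto simp: left_zfs_def V1_def)
    then show ?case by simp
  next
    case (step X Y)
    then show ?case using TAR_edge_preserves_card_Int_V1[OF assms(2)] by blast
  qed
  moreover have "right_zfs r \<inter> V1 r = {r+1}" by (auto simp: right_zfs_def V1_def)
  ultimately show False using assms(1) by simp
qed

lemma z0_lower_H:
  assumes "r \<ge> 2"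
  shows "z0_lower (H_V r) (H_E r) = 2*r + 2"
  unfolding z0_lower_def
proof (rule Least_equality)
  show "TAR_connected (H_V r) (H_E r) (2*r + 2)" using TAR_connected_H assms by simp
  fix k assume "TAR_connected (H_V r) (H_E r) k"
  then show "2*r + 2 \<le> k" using not_TAR_connected_H[of r k] assms by linarith
qed

lemma z0_H:
  assumes "r \<ge> 2"
  shows "z0 (H_V r) (H_E r) = 2*r + 2"
  unfolding z0_def
proof (rule Least_equality)
  show "\<forall>i. 2*r + 2 \<le> i \<and> i \<le> card (H_V r) \<longrightarrow> TAR_connected (H_V r) (H_E r) i"
    using TAR_connected_H assms by blast
  fix k assume "\<forall>i. k \<le> i \<and> i \<le> card (H_V r) \<longrightarrow> TAR_connected (H_V r) (H_E r) i"
  then have "k \<le> 2*r + 1 \<Longrightarrow> TAR_connected (H_V r) (H_E r) (2*r + 1)"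
    by (simp add: H_V_def)
  then show "2*r + 2 \<le> k" using not_TAR_connected_H[of r "2*r + 1"] assms by linarith
qed

theorem proposition3p4:
  fixes r :: nat
  assumes "r \<ge> 2"
  shows "Z (H_V r) (H_E r) = r + 2 \<and> Zbar (H_V r) (H_E r) = r + 2 \<and>
         z0_lower (H_V r) (H_E r) = 2*r + 2 \<and> z0 (H_V r) (H_E r) = 2*r + 2 \<and>
         2*r + 2 = Zbar (H_V r) (H_E r) + r"
  using Z_H Zbar_H z0_lower_H[OF assms] z0_H[OF assms] by simp

end
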